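(* Let $\{C_i\}_{i\in\Gamma}$ be a family of compact Hausdorff spaces, $X=\bigsqcup_{i\in\Gamma}C_i$ their topological coproduct, $\pi:X\to\Gamma$ with $\pi(C_i)=\{i\}$, and $\varepsilon=\{e\subseteq X\times X:\exists f\subseteq\Gamma\times\Gamma \text{ with } f\setminus\Delta\Gamma \text{ finite and } e\subseteq(\pi\times\pi)^{-1}(f)\}$. Let $X+_fY$ be a Hausdorff compact space with $Y$ compact Hausdorff and $f$ admissible, and let $\sim$ be the equivalence relation on $X+_fY$ given by $\sim\ =\Delta(X+_fY)\cup\bigcup_{i\in\Gamma}C_i\times C_i$. Then $X+_fY\in\mathrm{Pers}(\varepsilon)$ if and only if the quotient $(X+_fY)/\!\sim$ is Hausdorff.
   Context: Artin–Wraith glueing: $\mathrm{Closed}(A)$ is the set of closed subsets of $A$; $f:\mathrm{Closed}(A)\to\mathrm{Closed}(B)$ is admissible if $f(\emptyset)=\emptyset$ and $f$ preserves finite unions; $A+_fB$ is $A\sqcup B$ with closed sets the $D$ such that $D\cap A$ is closed in $A$, $D\cap B$ closed in $B$ and $f(D\cap A)\subseteq D$. $\mathrm{Comp}(X)$ is the category of compact spaces $X+_fW$ with $W$ compact Hausdorff, morphisms continuous maps which are the identity on $X$. For a Hausdorff compactification $X+_fW$ of $X$ ($X$ dense), $e\subseteq X\times X$ is perspective if $\mathrm{Cl}_{(X+_fW)^2}(e)\cap((X+_fW)^2-X^2)\subseteq\{(p,p):p\in W\}$; $\varepsilon_f$ is the set of perspective sets; the compactification is perspective if $\varepsilon\subseteq\varepsilon_f$;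 $\mathrm{Pers}(\varepsilon)$ is the full subcategory of $\mathrm{Comp}(X)$ of perspective compactifications. *)

theory Defs
  imports "HOL-Analysis.Analysis"
begin

definition Closed :: "'a topology \<Rightarrow> 'a set set" where
  "Closed A = {D. closedin A D}"

definition admissible :: "'a topology \<Rightarrow> 'b topology \<Rightarrow> ('a set \<Rightarrow> 'b set) \<Rightarrow> bool" where
  "admissible A B f \<longleftrightarrow>
     (\<forall>D\<in>Closed A. f D \<in> Closed B) \<and> f {} = {} \<and>
     (\<forall>D\<in>Closed A. \<forall>E\<in>Closed A. f (D \<union> E) = f D \<union> f E)"

definition glue_closed :: "'a topology \<Rightarrow> 'b topology \<Rightarrow> ('a set \<Rightarrow> 'b set) \<Rightarrow> ('a + 'b) set \<Rightarrow> bool" where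
  "glue_closed A B f D \<longleftrightarrow>
     D \<subseteq> Inl ` topspace A \<union> Inr ` topspace B \<and>
     closedin A (Inl -` D) \<and> closedin B (Inr -` D) \<and> Inr ` f (Inl -` D) \<subseteq> D"

definition glue :: "'a topology \<Rightarrow> 'b topology \<Rightarrow> ('a set \<Rightarrow> 'b set) \<Rightarrow> ('a + 'b) topology" where
  "glue A B f = topology (\<lambda>U. U \<subseteq> Inl ` topspace A \<union> Inr ` topspace B \<and>
       glue_closed A B f ((Inl ` topspace A \<union> Inr ` topspace B) - U))"

definition perspective_sets :: "'a topology \<Rightarrow> 'b topology \<Rightarrow> ('a set \<Rightarrow> 'b set) \<Rightarrow> ('a \<times> 'a) set set" where
  "perspective_sets X W f =
     {e. e \<subseteq> topspace X \<times> topspace X \<and>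
         (let G = glue X W f in
            (prod_topology G G) closure_of ((\<lambda>(a, b). (Inl a, Inl b)) ` e)
              \<inter> ((topspace G \<times> topspace G) - (Inl ` topspace X \<times> Inl ` topspace X))
            \<subseteq> {(Inr p, Inr p) | p. p \<in> topspace W})}"

definition in_Pers :: "('a \<times> 'a) set set \<Rightarrow> 'a topology \<Rightarrow> 'b topology \<Rightarrow> ('a set \<Rightarrow> 'b set) \<Rightarrow> bool" where
  "in_Pers \<epsilon> X W f \<longleftrightarrow>
     compact_space W \<and> Hausdorff_space W \<and> admissible X W f \<and>
     compact_space (glue X W f) \<and> Hausdorff_space (glue X W f) \<and>
     \<epsilon> \<subseteq> perspective_sets X W f"

definition quotient_topology :: "'a topology \<Rightarrow> ('a \<times> 'a) set \<Rightarrow> 'a set topology" where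
  "quotient_topology T R = topology (\<lambda>U. U \<subseteq> topspace T // R \<and> openin T (\<Union>U))"

end

theory Submission
  imports Defs
begin

text \<open>Write \<open>B\<^sub>i\<close> for the copy of \<open>C\<^sub>i\<close> in \<open>X +\<^sub>f Y\<close>: these are pairwise disjoint, open and
  compact, and \<open>\<sim>\<close> collapses each of them to a point. A quotient of a compact Hausdorff space
  is Hausdorff iff the relation is closed, since the saturation of a closed set is then closed and
  the quotient map is closed. Closedness of \<open>\<sim>\<close> is equivalent to perspectivity of \<open>\<epsilon>\<close>:
  \<open>\<Union>\<^sub>i C\<^sub>i \<times> C\<^sub>i\<close> belongs to \<open>\<epsilon>\<close>, and its perspectivity says that the closure of
  \<open>\<Union>\<^sub>i B\<^sub>i \<times> B\<^sub>i\<close> only adds diagonal points of \<open>Y\<close> (points of \<open>B\<^sub>i \<times> B\<^sub>j\<close>, \<open>i \<noteq> j\<close>,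
  are excluded by openness); conversely each \<open>e \<in> \<epsilon>\<close> lies in \<open>\<sim>\<close> together with finitely
  many compact, hence closed, rectangles \<open>B\<^sub>i \<times> B\<^sub>j\<close>, none of which meets the remainder.\<close>

lemma admissible_closedin:
  "admissible A B f \<Longrightarrow> closedin A D \<Longrightarrow> closedin B (f D)"
  by (simp add: admissible_def Closed_def)

lemma admissible_Un:
  "admissible A B f \<Longrightarrow> closedin A D \<Longrightarrow> closedin A E \<Longrightarrow> f (D \<union> E) = f D \<union> f E"
  by (simp add: admissible_def Closed_def)

lemma admissible_mono:
  assumes "admissible A B f" "closedin A D" "closedin A E" "D \<subseteq> E"
  shows "f D \<subseteq> f E"
  using admissible_Un[OF assms(1-3)] assms(4) by (metis Un_absorb1 Un_upper1)

lemma glue_closed_Un: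
  assumes "admissible A B f" "glue_closed A B f D" "glue_closed A B f E"
  shows "glue_closed A B f (D \<union> E)"
  using assms admissible_Un[OF assms(1)] by (auto simp: glue_closed_def)

lemma glue_closed_Inter:
  assumes adm: "admissible A B f" and \<D>: "\<forall>D\<in>\<D>. glue_closed A B f D"
  shows "glue_closed A B f ((Inl ` topspace A \<union> Inr ` topspace B) \<inter> \<Inter>\<D>)"
proof -
  let ?D = "(Inl ` topspace A \<union> Inr ` topspace B) \<inter> \<Inter>\<D>"
  have "closedin A (\<Inter> (insert (topspace A) ((\<lambda>D. Inl -` D) ` \<D>)))"
    using \<D> by (intro closedin_Inter) (auto simp: glue_closed_def)
  moreover have "Inl -` ?D = \<Inter> (insert (topspace A) ((\<lambda>D. Inl -` D) ` \<D>))" by auto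
  ultimately have clA: "closedin A (Inl -` ?D)" by simp
  have "closedin B (\<Inter> (insert (topspace B) ((\<lambda>D. Inr -` D) ` \<D>)))"
    using \<D> by (intro closedin_Inter) (auto simp: glue_closed_def)
  moreover have "Inr -` ?D = \<Inter> (insert (topspace B) ((\<lambda>D. Inr -` D) ` \<D>))" by auto
  ultimately have clB: "closedin B (Inr -` ?D)" by simp
  have "f (Inl -` ?D) \<subseteq> f (Inl -` D)" if "D \<in> \<D>" for D
    using that \<D> clA by (intro admissible_mono[OF adm]) (auto simp: glue_closed_def)
  moreover have "f (Inl -` ?D) \<subseteq> topspace B"
    using admissible_closedin[OF adm clA] closedin_subset by blast
  ultimately have "Inr ` f (Inl -` ?D) \<subseteq> ?D"
    using \<D> by (fastforce simp: glue_closed_def)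
  then show ?thesis
    using clA clB by (simp add: glue_closed_def)
qed

lemma istopology_glue:
  assumes "admissible A B f"
  shows "istopology (\<lambda>U. U \<subseteq> Inl ` topspace A \<union> Inr ` topspace B \<and>
       glue_closed A B f ((Inl ` topspace A \<union> Inr ` topspace B) - U))"
  unfolding istopology_def
proof (rule conjI; intro allI impI)
  let ?S = "Inl ` topspace A \<union> Inr ` topspace B"
  fix U V
  assume "U \<subseteq> ?S \<and> glue_closed A B f (?S - U)" "V \<subseteq> ?S \<and> glue_closed A B f (?S - V)"
  moreover have "?S - U \<inter> V = (?S - U) \<union> (?S - V)" by blast
  ultimately show "U \<inter> V \<subseteq> ?S \<and> glue_closed A B f (?S - U \<inter> V)"
    using glue_closed_Un[OF assms] by auto
next
  let ?S = "Inl ` topspace A \<union> Inr ` topspace B"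
  fix \<K>
  assume "\<forall>U\<in>\<K>. U \<subseteq> ?S \<and> glue_closed A B f (?S - U)"
  moreover have "?S - \<Union>\<K> = ?S \<inter> \<Inter> ((\<lambda>U. ?S - U) ` \<K>)" by blast
  ultimately show "\<Union>\<K> \<subseteq> ?S \<and> glue_closed A B f (?S - \<Union>\<K>)"
    using glue_closed_Inter[OF assms, of "(\<lambda>U. ?S - U) ` \<K>"] by auto
qed

lemma openin_glue:
  assumes "admissible A B f"
  shows "openin (glue A B f) U \<longleftrightarrow> U \<subseteq> Inl ` topspace A \<union> Inr ` topspace B \<and>
       glue_closed A B f ((Inl ` topspace A \<union> Inr ` topspace B) - U)"
  unfolding glue_def using istopology_glue[OF assms] by simp

lemma topspace_glue:
  assumes "admissible A B f"
  shows "topspace (glue A B f) = Inl ` topspace A \<union> Inr ` topspace B"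
proof -
  have "glue_closed A B f {}"
    using assms by (simp add: glue_closed_def admissible_def)
  then have "openin (glue A B f) (Inl ` topspace A \<union> Inr ` topspace B)"
    by (simp add: openin_glue[OF assms])
  then show ?thesis
    by (metis openin_glue[OF assms] openin_subset openin_topspace subset_antisym)
qed

lemma openin_glue_Inl:
  assumes adm: "admissible A B f" and U: "openin A U"
  shows "openin (glue A B f) (Inl ` U)"
proof -
  have "f (topspace A - U) \<subseteq> topspace B"
    using admissible_closedin[OF adm] closedin_subset U by blast
  moreover have "Inl -` ((Inl ` topspace A \<union> Inr ` topspace B) - Inl ` U) = topspace A - U"
    "Inr -` ((Inl ` topspace A \<union> Inr ` topspace B) - Inl ` U) = topspace B" by auto
  ultimately show ?thesis
    using U openin_subset by (fastforce simp: openin_glue[OF adm] glue_closed_def)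
qed

lemma continuous_map_glue_Inl:
  assumes adm: "admissible A B f"
  shows "continuous_map A (glue A B f) Inl"
  unfolding continuous_map_def
proof (intro conjI allI impI)
  show "Inl \<in> topspace A \<rightarrow> topspace (glue A B f)"
    using topspace_glue[OF adm] by auto
  fix U assume "openin (glue A B f) U"
  moreover have "{x \<in> topspace A. Inl x \<in> U} =
      topspace A - Inl -` ((Inl ` topspace A \<union> Inr ` topspace B) - U)" by auto
  ultimately show "openin A {x \<in> topspace A. Inl x \<in> U}"
    by (auto simp: openin_glue[OF adm] glue_closed_def)
qed

lemma istopology_quotient:
  assumes "equiv (topspace T) R"
  shows "istopology (\<lambda>U. U \<subseteq> topspace T // R \<and> openin T (\<Union>U))"
  unfolding istopology_def
proof (rule conjI; intro allI impI)
  fix U V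
  assume U: "U \<subseteq> topspace T // R \<and> openin T (\<Union>U)" and V: "V \<subseteq> topspace T // R \<and> openin T (\<Union>V)"
  then have "\<Union>(U \<inter> V) = \<Union>U \<inter> \<Union>V"
    using quotient_disj[OF assms] by blast
  then show "U \<inter> V \<subseteq> topspace T // R \<and> openin T (\<Union>(U \<inter> V))"
    using U V by auto
next
  fix \<K>
  assume "\<forall>U\<in>\<K>. U \<subseteq> topspace T // R \<and> openin T (\<Union>U)"
  moreover have "\<Union>(\<Union>\<K>) = \<Union>(Union ` \<K>)" by blast
  ultimately show "\<Union>\<K> \<subseteq> topspace T // R \<and> openin T (\<Union>(\<Union>\<K>))"
    by auto
qed

lemma openin_quotient_topology:
  assumes "equiv (topspace T) R"
  shows "openin (quotient_topology T R) U \<longleftrightarrow> U \<subseteq> topspace T // R \<and> openin T (\<Union>U)"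
  unfolding quotient_topology_def using istopology_quotient[OF assms] by simp

lemma topspace_quotient_topology:
  assumes "equiv (topspace T) R"
  shows "topspace (quotient_topology T R) = topspace T // R"
  by (metis Union_quotient[OF assms] openin_quotient_topology[OF assms] openin_subset
      openin_topspace order_refl subset_antisym)

lemma quotient_map_quotient_topology:
  assumes eq: "equiv (topspace T) R"
  shows "quotient_map T (quotient_topology T R) (\<lambda>x. R `` {x})"
  unfolding quotient_map_def topspace_quotient_topology[OF eq]
proof (intro conjI allI impI)
  show "(\<lambda>x. R `` {x}) ` topspace T = topspace T // R"
    by (auto simp: quotient_def)
  fix U
  assume U: "U \<subseteq> topspace T // R"
  have "{x \<in> topspace T. R `` {x} \<in> U} = \<Union>U"
  proof (intro subset_antisym subsetI)
    fix x
    assume "x \<in> {x \<in> topspace T. R `` {x} \<in> U}"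
    then show "x \<in> \<Union>U"
      using equiv_class_self[OF eq] by blast
  next
    fix x
    assume "x \<in> \<Union>U"
    then obtain a where "R `` {a} \<in> U" "a \<in> topspace T" "x \<in> R `` {a}"
      using U by (auto elim!: quotientE)
    then show "x \<in> {x \<in> topspace T. R `` {x} \<in> U}"
      using equiv_class_eq_iff[OF eq, of a x] by auto
  qed
  then show "openin T {x \<in> topspace T. R `` {x} \<in> U} \<longleftrightarrow> openin (quotient_topology T R) U"
    using U by (simp add: openin_quotient_topology[OF eq])
qed

lemma Hausdorff_quotient_topology_imp_closedin:
  assumes eq: "equiv (topspace T) R" and "Hausdorff_space (quotient_topology T R)"
  shows "closedin (prod_topology T T) R"
proof -
  let ?Q = "quotient_topology T R"
  have "continuous_map (prod_topology T T) (prod_topology ?Q ?Q) (\<lambda>(x, y). (R `` {x}, R `` {y}))"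
    using quotient_imp_continuous_map[OF quotient_map_quotient_topology[OF eq]]
    by (simp add: continuous_map_prod_top)
  then have "closedin (prod_topology T T)
      {z \<in> topspace (prod_topology T T). (\<lambda>(x, y). (R `` {x}, R `` {y})) z \<in> (\<lambda>c. (c, c)) ` topspace ?Q}"
    by (rule closedin_continuous_map_preimage[OF _ assms(2)[unfolded Hausdorff_space_closedin_diagonal]])
  moreover have "(R `` {x}, R `` {y}) \<in> (\<lambda>c. (c, c)) ` topspace ?Q \<longleftrightarrow> R `` {x} = R `` {y}"
    if "x \<in> topspace T" for x y
    using that by (auto simp: topspace_quotient_topology[OF eq] image_iff intro: quotientI)
  then have "{z \<in> topspace (prod_topology T T). (\<lambda>(x, y). (R `` {x}, R `` {y})) z \<in> (\<lambda>c. (c, c)) ` topspace ?Q} = R"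
    using equiv_type[OF eq] eq by (auto simp: eq_equiv_class_iff[OF eq] equiv_def dest: symD)
  ultimately show ?thesis by simp
qed

lemma closedin_Image:
  assumes "compact_space T" "closedin (prod_topology T T) R" "closedin T K"
  shows "closedin T (R `` K)"
proof -
  have "closedin (prod_topology T T) (R \<inter> K \<times> topspace T)"
    using assms by (intro closedin_Int) (simp_all add: closedin_prod_Times_iff)
  then have "closedin T (snd ` (R \<inter> K \<times> topspace T))"
    using closed_map_snd[OF assms(1)] closed_map_def by blast
  moreover have "snd ` (R \<inter> K \<times> topspace T) = R `` K"
    using closedin_subset[OF assms(2)] by force
  ultimately show ?thesis by simp
qed

lemma closed_map_quotient_topology:
  assumes eq: "equiv (topspace T) R" and "compact_space T" "closedin (prod_topology T T) R"
  shows "closed_map T (quotient_topology T R) (\<lambda>x. R `` {x})"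
  unfolding closed_map_def
proof (intro allI impI)
  fix K
  assume K: "closedin T K"
  have "{x \<in> topspace T. R `` {x} \<in> (\<lambda>x. R `` {x}) ` K} = R `` K"
    using closedin_subset[OF K] equiv_class_eq_iff[OF eq] by (force simp: image_iff)
  then have "closedin T {x \<in> topspace T. R `` {x} \<in> (\<lambda>x. R `` {x}) ` K}"
    using closedin_Image[OF assms(2,3) K] by simp
  moreover have "(\<lambda>x. R `` {x}) ` K \<subseteq> topspace (quotient_topology T R)"
    using closedin_subset[OF K] by (auto simp: topspace_quotient_topology[OF eq] quotientI)
  ultimately show "closedin (quotient_topology T R) ((\<lambda>x. R `` {x}) ` K)"
    using quotient_map_quotient_topology[OF eq] by (simp add: quotient_map_closedin)
qed

lemma Hausdorff_quotient_topology_iff_closedin: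
  assumes eq: "equiv (topspace T) R" and "compact_space T" "Hausdorff_space T"
  shows "Hausdorff_space (quotient_topology T R) \<longleftrightarrow> closedin (prod_topology T T) R"
proof
  assume closed: "closedin (prod_topology T T) R"
  have quotient: "quotient_map T (quotient_topology T R) (\<lambda>x. R `` {x})"
    by (rule quotient_map_quotient_topology[OF eq])
  show "Hausdorff_space (quotient_topology T R)"
  proof (rule normal_Hausdorff_space_closed_continuous_map_image[THEN conjunct2])
    show "normal_space T"
      using assms(2,3) by (simp add: compact_Hausdorff_or_regular_imp_normal_space)
    show "closed_map T (quotient_topology T R) (\<lambda>x. R `` {x})"
      by (rule closed_map_quotient_topology[OF eq assms(2) closed])
    show "continuous_map T (quotient_topology T R) (\<lambda>x. R `` {x})"
      by (rule quotient_imp_continuous_map[OF quotient])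
    show "(\<lambda>x. R `` {x}) ` topspace T = topspace (quotient_topology T R)"
      using quotient by (simp add: quotient_map_def)
  qed fact
qed (rule Hausdorff_quotient_topology_imp_closedin[OF eq])

definition collapse_rel :: "'x topology \<Rightarrow> ('i \<Rightarrow> 'x set) \<Rightarrow> 'i set \<Rightarrow> ('x \<times> 'x) set" where
  "collapse_rel X B I = Id_on (topspace X) \<union> (\<Union>i\<in>I. B i \<times> B i)"

lemma equiv_collapse_rel:
  assumes "\<And>i. i \<in> I \<Longrightarrow> B i \<subseteq> topspace X" "disjoint_family_on B I"
  shows "equiv (topspace X) (collapse_rel X B I)"
proof (rule equivI)
  show "collapse_rel X B I \<subseteq> topspace X \<times> topspace X"
    using assms(1) by (auto simp: collapse_rel_def)
  show "trans (collapse_rel X B I)"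
  proof (rule transI)
    fix x y z
    assume xy: "(x, y) \<in> collapse_rel X B I" and yz: "(y, z) \<in> collapse_rel X B I"
    show "(x, z) \<in> collapse_rel X B I"
    proof (cases "x = y \<or> y = z")
      case True
      then show ?thesis using xy yz by auto
    next
      case False
      then obtain i j where "i \<in> I" "x \<in> B i" "y \<in> B i" "j \<in> I" "y \<in> B j" "z \<in> B j"
        using xy yz by (auto simp: collapse_rel_def)
      moreover from this have "i = j"
        using assms(2) by (auto simp: disjoint_family_on_def)
      ultimately show ?thesis
        by (auto simp: collapse_rel_def)
    qed
  qed
qed (auto simp: collapse_rel_def refl_on_def sym_def)

lemma closure_of_squares_Int_Times_subset:
  assumes "\<And>i. i \<in> I \<Longrightarrow> openin X (B i)" "disjoint_family_on B I"
  shows "prod_topology X X closure_of (\<Union>i\<in>I. B i \<times> B i) \<inter> \<Union>(B ` I) \<times> \<Union>(B ` I)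
           \<subseteq> (\<Union>i\<in>I. B i \<times> B i)"
proof
  fix z
  assume z: "z \<in> prod_topology X X closure_of (\<Union>i\<in>I. B i \<times> B i) \<inter> \<Union>(B ` I) \<times> \<Union>(B ` I)"
  then obtain i j where ij: "i \<in> I" "j \<in> I" "z \<in> B i \<times> B j"
    by (auto simp: mem_Times_iff)
  have "openin (prod_topology X X) (B i \<times> B j)"
    using assms(1) ij by (simp add: openin_prod_Times_iff)
  then obtain w where w: "w \<in> (\<Union>k\<in>I. B k \<times> B k)" "w \<in> B i \<times> B j"
    using z[THEN IntD1, unfolded in_closure_of, THEN conjunct2, rule_format, of "B i \<times> B j"] ij(3)
    by blast
  then obtain k where k: "k \<in> I" "w \<in> B k \<times> B k"
    by blast
  have "i = k" "j = k"
    using disjoint_family_onD[OF assms(2)] ij(1,2) k w(2) by (auto simp: mem_Times_iff)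
  then show "z \<in> (\<Union>i\<in>I. B i \<times> B i)"
    using ij by blast
qed

lemma closedin_collapse_rel:
  assumes "Hausdorff_space X" "\<And>i. i \<in> I \<Longrightarrow> openin X (B i)" "disjoint_family_on B I"
    and "prod_topology X X closure_of (\<Union>i\<in>I. B i \<times> B i) - \<Union>(B ` I) \<times> \<Union>(B ` I)
           \<subseteq> Id_on (topspace X)"
  shows "closedin (prod_topology X X) (collapse_rel X B I)"
proof -
  have "Id_on (topspace X) = (\<lambda>x. (x, x)) ` topspace X"
    by (auto simp: Id_on_def)
  then have "prod_topology X X closure_of Id_on (topspace X) = Id_on (topspace X)"
    using assms(1) by (simp add: closure_of_closedin Hausdorff_space_closedin_diagonal)
  moreover have "prod_topology X X closure_of (\<Union>i\<in>I. B i \<times> B i) \<subseteq> collapse_rel X B I"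
    using closure_of_squares_Int_Times_subset[OF assms(2,3)] assms(4)
    by (auto simp: collapse_rel_def)
  ultimately have "prod_topology X X closure_of collapse_rel X B I \<subseteq> collapse_rel X B I"
    by (simp add: collapse_rel_def)
  moreover have "collapse_rel X B I \<subseteq> topspace (prod_topology X X)"
    using assms(2) openin_subset by (fastforce simp: collapse_rel_def)
  ultimately show ?thesis
    by (simp flip: closure_of_subset_eq)
qed

lemma closure_of_subset_collapse_rel_Un:
  assumes "closedin (prod_topology X X) (collapse_rel X B I)" "Hausdorff_space X"
    and "\<And>i. i \<in> I \<Longrightarrow> compactin X (B i)"
    and "F \<subseteq> I \<times> I" "finite (F - Id)" "e \<subseteq> (\<Union>(i, j)\<in>F. B i \<times> B j)"
  shows "prod_topology X X closure_of e \<subseteq> collapse_rel X B I \<union> (\<Union>(i, j)\<in>F - Id. B i \<times> B j)"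
proof (rule closure_of_minimal)
  have "compactin (prod_topology X X) (\<Union>(i, j)\<in>F - Id. B i \<times> B j)"
    using assms(3-5) by (intro compactin_Union) (auto simp: compactin_Times)
  then have "closedin (prod_topology X X) (\<Union>(i, j)\<in>F - Id. B i \<times> B j)"
    using assms(2) by (simp add: compactin_imp_closedin Hausdorff_space_prod_topology)
  then show "closedin (prod_topology X X) (collapse_rel X B I \<union> (\<Union>(i, j)\<in>F - Id. B i \<times> B j))"
    using assms(1) by (rule closedin_Un[rotated])
  show "e \<subseteq> collapse_rel X B I \<union> (\<Union>(i, j)\<in>F - Id. B i \<times> B j)"
    using assms(4,6) by (fastforce simp: collapse_rel_def)
qed

lemma openin_glue_sum_block:
  assumes "admissible (sum_topology C \<Gamma>) Y f" "i \<in> \<Gamma>"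
  shows "openin (glue (sum_topology C \<Gamma>) Y f) (Inl ` ({i} \<times> topspace (C i)))"
proof (rule openin_glue_Inl[OF assms(1)])
  have "{x. (j, x) \<in> {i} \<times> topspace (C i)} = (if j = i then topspace (C j) else {})" for j
    by auto
  then show "openin (sum_topology C \<Gamma>) ({i} \<times> topspace (C i))"
    using assms(2) by (auto simp: openin_sum_topology)
qed

lemma compactin_glue_sum_block:
  assumes "admissible (sum_topology C \<Gamma>) Y f" "i \<in> \<Gamma>" "compact_space (C i)"
  shows "compactin (glue (sum_topology C \<Gamma>) Y f) (Inl ` ({i} \<times> topspace (C i)))"
proof -
  have "continuous_map (C i) (glue (sum_topology C \<Gamma>) Y f) (Inl \<circ> (\<lambda>x. (i, x)))"
    using continuous_map_component_injection[OF assms(2)] continuous_map_glue_Inl[OF assms(1)]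
    by (rule continuous_map_compose)
  then have "compactin (glue (sum_topology C \<Gamma>) Y f) ((Inl \<circ> (\<lambda>x. (i, x))) ` topspace (C i))"
    using assms(3) image_compactin compact_space_def by blast
  moreover have "(Inl \<circ> (\<lambda>x. (i, x))) ` topspace (C i) = Inl ` ({i} \<times> topspace (C i))"
    by auto
  ultimately show ?thesis by metis
qed

definition block_entourages :: "('i \<Rightarrow> 'a topology) \<Rightarrow> 'i set \<Rightarrow> (('i \<times> 'a) \<times> ('i \<times> 'a)) set set" where
  "block_entourages C \<Gamma> =
     {e. e \<subseteq> topspace (sum_topology C \<Gamma>) \<times> topspace (sum_topology C \<Gamma>) \<and>
         (\<exists>F \<subseteq> \<Gamma> \<times> \<Gamma>. finite (F - Id) \<and> e \<subseteq> {(x, y). (fst x, fst y) \<in> F})}"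

lemma block_entourages_perspective_iff_closedin_collapse_rel:
  fixes C :: "'i \<Rightarrow> 'a topology" and \<Gamma> :: "'i set"
    and Y :: "'y topology" and f :: "('i \<times> 'a) set \<Rightarrow> 'y set"
  defines "G \<equiv> glue (sum_topology C \<Gamma>) Y f"
    and "B \<equiv> \<lambda>i. Inl ` ({i} \<times> topspace (C i)) :: ('i \<times> 'a + 'y) set"
  assumes compact: "\<And>i. i \<in> \<Gamma> \<Longrightarrow> compact_space (C i)"
    and adm: "admissible (sum_topology C \<Gamma>) Y f" and Hausdorff: "Hausdorff_space G"
  shows "block_entourages C \<Gamma> \<subseteq> perspective_sets (sum_topology C \<Gamma>) Y f
           \<longleftrightarrow> closedin (prod_topology G G) (collapse_rel G B \<Gamma>)"
proof -
  let ?S = "sum_topology C \<Gamma>"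
  let ?P = "Inl ` topspace ?S \<times> Inl ` topspace ?S :: (('i \<times> 'a + 'y) \<times> ('i \<times> 'a + 'y)) set"
  let ?img = "\<lambda>e. (\<lambda>(a, b). (Inl a, Inl b)) ` e :: (('i \<times> 'a + 'y) \<times> ('i \<times> 'a + 'y)) set"
  have B_open: "openin G (B i)" if "i \<in> \<Gamma>" for i
    unfolding G_def B_def using adm that by (rule openin_glue_sum_block)
  have B_disjoint: "disjoint_family_on B \<Gamma>"
    by (auto simp: B_def disjoint_family_on_def)
  have Union_B: "\<Union>(B ` \<Gamma>) = Inl ` topspace ?S"
    by (auto simp: B_def)
  have topspace_G: "topspace G = Inl ` topspace ?S \<union> Inr ` topspace Y"
    unfolding G_def using adm by (rule topspace_glue)
  have perspective_iff: "e \<in> perspective_sets ?S Y f \<longleftrightarrow> e \<subseteq> topspace ?S \<times> topspace ?S \<and>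
      prod_topology G G closure_of ?img e - ?P \<subseteq> {(Inr p, Inr p) | p. p \<in> topspace Y}" for e
    using closure_of_subset_topspace[of "prod_topology G G" "?img e"]
    by (auto simp: perspective_sets_def G_def Let_def)
  show ?thesis
  proof
    assume persp: "block_entourages C \<Gamma> \<subseteq> perspective_sets ?S Y f"
    let ?e0 = "\<Union>i\<in>\<Gamma>. ({i} \<times> topspace (C i)) \<times> ({i} \<times> topspace (C i))"
    have "Id_on \<Gamma> - Id = {}"
      by blast
    then have "finite (Id_on \<Gamma> - Id)"
      by (metis finite.emptyI)
    then have "?e0 \<in> block_entourages C \<Gamma>"
      unfolding block_entourages_def by (auto intro!: exI[of _ "Id_on \<Gamma>"])
    then have "?e0 \<in> perspective_sets ?S Y f"
      by (rule subsetD[OF persp])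
    then have "prod_topology G G closure_of ?img ?e0 - ?P \<subseteq> {(Inr p, Inr p) | p. p \<in> topspace Y}"
      unfolding perspective_iff by (rule conjunct2)
    moreover have "?img ?e0 = (\<Union>i\<in>\<Gamma>. B i \<times> B i)"
      by (force simp: B_def)
    ultimately have "prod_topology G G closure_of (\<Union>i\<in>\<Gamma>. B i \<times> B i) - ?P
                       \<subseteq> {(Inr p, Inr p) | p. p \<in> topspace Y}"
      by (simp only:)
    also have "\<dots> \<subseteq> Id_on (topspace G)"
      using topspace_G by auto
    finally show "closedin (prod_topology G G) (collapse_rel G B \<Gamma>)"
      using Hausdorff B_open B_disjoint by (intro closedin_collapse_rel) (simp_all add: Union_B)
  next
    assume closed: "closedin (prod_topology G G) (collapse_rel G B \<Gamma>)"
    show "block_entourages C \<Gamma> \<subseteq> perspective_sets ?S Y f"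
    proof
      fix e
      assume "e \<in> block_entourages C \<Gamma>"
      then obtain F where e: "e \<subseteq> topspace ?S \<times> topspace ?S" "F \<subseteq> \<Gamma> \<times> \<Gamma>" "finite (F - Id)"
          "e \<subseteq> {(x, y). (fst x, fst y) \<in> F}"
        by (auto simp: block_entourages_def)
      have "?img e \<subseteq> (\<Union>(i, j)\<in>F. B i \<times> B j)"
        using e(1,4) by (force simp: B_def)
      then have "prod_topology G G closure_of ?img e \<subseteq> collapse_rel G B \<Gamma> \<union> (\<Union>(i, j)\<in>F - Id. B i \<times> B j)"
        using closed Hausdorff compactin_glue_sum_block[OF adm] compact e(2,3)
        by (intro closure_of_subset_collapse_rel_Un) (auto simp: G_def B_def)
      moreover have "collapse_rel G B \<Gamma> \<union> (\<Union>(i, j)\<in>F - Id. B i \<times> B j) \<subseteq> Id_on (topspace G) \<union> ?P"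
        using e(2) by (auto simp: collapse_rel_def B_def)
      ultimately have "prod_topology G G closure_of ?img e - ?P \<subseteq> Id_on (topspace G) - ?P"
        by blast
      also have "\<dots> \<subseteq> {(Inr p, Inr p) | p. p \<in> topspace Y}"
        using topspace_G by auto
      finally show "e \<in> perspective_sets ?S Y f"
        unfolding perspective_iff using e(1) by blast
    qed
  qed
qed

theorem mainTheorem5:
  fixes C :: "'i \<Rightarrow> 'a topology" and \<Gamma> :: "'i set"
    and Y :: "'y topology" and f :: "('i \<times> 'a) set \<Rightarrow> 'y set"
  assumes "\<And>i. i \<in> \<Gamma> \<Longrightarrow> compact_space (C i) \<and> Hausdorff_space (C i)"
    and "compact_space Y" and "Hausdorff_space Y"
    and "admissible (sum_topology C \<Gamma>) Y f"
    and "compact_space (glue (sum_topology C \<Gamma>) Y f)"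
    and "Hausdorff_space (glue (sum_topology C \<Gamma>) Y f)"
  shows "in_Pers
           {e. e \<subseteq> topspace (sum_topology C \<Gamma>) \<times> topspace (sum_topology C \<Gamma>) \<and>
               (\<exists>F \<subseteq> \<Gamma> \<times> \<Gamma>. finite (F - Id) \<and> e \<subseteq> {(x, y). (fst x, fst y) \<in> F})}
           (sum_topology C \<Gamma>) Y f
     \<longleftrightarrow> Hausdorff_space
           (quotient_topology (glue (sum_topology C \<Gamma>) Y f)
              (Id_on (topspace (glue (sum_topology C \<Gamma>) Y f)) \<union>
               (\<Union>i\<in>\<Gamma>. (Inl ` ({i} \<times> topspace (C i))) \<times> (Inl ` ({i} \<times> topspace (C i))))))"
proof -
  let ?S = "sum_topology C \<Gamma>"
  let ?G = "glue (sum_topology C \<Gamma>) Y f"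
  let ?B = "\<lambda>i. Inl ` ({i} \<times> topspace (C i)) :: ('i \<times> 'a + 'y) set"
  have "equiv (topspace ?G) (collapse_rel ?G ?B \<Gamma>)"
    using openin_subset[OF openin_glue_sum_block[OF assms(4)]]
    by (intro equiv_collapse_rel) (auto simp: disjoint_family_on_def)
  then have "Hausdorff_space (quotient_topology ?G (collapse_rel ?G ?B \<Gamma>))
               \<longleftrightarrow> closedin (prod_topology ?G ?G) (collapse_rel ?G ?B \<Gamma>)"
    using assms(5,6) by (rule Hausdorff_quotient_topology_iff_closedin)
  also have "\<dots> \<longleftrightarrow> block_entourages C \<Gamma> \<subseteq> perspective_sets ?S Y f"
    using assms(1,4,6) by (intro block_entourages_perspective_iff_closedin_collapse_rel[symmetric]) auto
  also have "\<dots> \<longleftrightarrow> in_Pers (block_entourages C \<Gamma>) ?S Y f"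
    using assms(2-6) by (simp add: in_Pers_def)
  finally show ?thesis
    unfolding block_entourages_def collapse_rel_def by (rule sym)
qed

end
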